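(* Let $k\ge5$ and $n\ge k^3$ be integers. Let $f^*(n,k)$ denote the maximum of $\min\{|\mathcal A|,|\mathcal B|\}$ over all pairs $\mathcal A,\mathcal B\subset\binom{[n]}{k}$ such that $\mathcal A\cap\mathcal B=\emptyset$, $\mathcal A$ and $\mathcal B$ are cross-intersecting, and neither $\mathcal A$ nor $\mathcal B$ is a star. Then $$f^*(n,k)=\left\lfloor\frac12\left(\binom{n-1}{n-k}-\binom{n-2k}{k-1}\right)\right\rfloor+1.$$
   Context: $[n]=\{1,\dots,n\}$ and $\binom{[n]}{k}$ is the collection of all $k$-element subsets of $[n]$. Families $\mathcal A,\mathcal B$ are cross-intersecting if $A\cap B\neq\emptyset$ for all $A\in\mathcal A$, $B\in\mathcal B$. A family $\mathcal F$ is a star if there is $x\in[n]$ with $x\in F$ for all $F\in\mathcal F$. *)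

theory Defs
  imports Complex_Main
begin

definition ksets :: "nat \<Rightarrow> nat \<Rightarrow> nat set set" where
  "ksets n k = {F. F \<subseteq> {1..n} \<and> card F = k}"

definition cross_intersecting :: "'a set set \<Rightarrow> 'a set set \<Rightarrow> bool" where
  "cross_intersecting A B \<longleftrightarrow> (\<forall>X\<in>A. \<forall>Y\<in>B. X \<inter> Y \<noteq> {})"

definition is_star :: "nat \<Rightarrow> nat set set \<Rightarrow> bool" where
  "is_star n F \<longleftrightarrow> (\<exists>x\<in>{1..n}. \<forall>X\<in>F. x \<in> X)"

definition f_star :: "nat \<Rightarrow> nat \<Rightarrow> nat" where
  "f_star n k = Max {min (card A) (card B) | A B.
      A \<subseteq> ksets n k \<and> B \<subseteq> ksets n k \<and> A \<inter> B = {} \<and>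
      cross_intersecting A B \<and> \<not> is_star n A \<and> \<not> is_star n B}"

end

(*
  Let X = C(n-1,k-1) - C(n-2k,k-1), the number of k-sets through a point x that meet a fixed
  (2k-1)-set avoiding x.

  If A cannot be pierced by two points, every member of B contains one of at most
  k^3 triples, so |B| <= k^3 C(n-3,k-3), far below X/2 when n >= k^3.  Otherwise some point x
  lies in at least half of A.  As neither family is a star, the parts A', B' of A, B avoiding x
  are nonempty.  The members of B through x meet every member of A', so each of them meets the
  core R = Inter A' or contains x and one of at most (k - |R|)^2 pairs of points; moreover
  |A'| <= C(n-|R|-1, k-|R|).  With S the core of B' and |R| <= |S|, a case analysis on |R|
  (equal to 2, between 3 and k-2, at least k-1) yields 2 min(|A|,|B|) <= X + 2.

  Take k-sets T1, T2 meeting in one point, x outside both, and let H1, H2 be the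
  k-sets through x meeting T1, T2.  Splitting H1 Int H2 into two halves, the families
  {T2} Un (H1 - H2) Un (one half) and {T1} Un (H2 - H1) Un (other half) are disjoint,
  cross-intersecting and not stars, and the smaller one has X div 2 + 1 members.
*)

theory Submission
  imports Defs
begin

lemma finite_ksets: "finite (ksets n k)"
  by (rule finite_subset[of _ "Pow {1..n}"]) (auto simp: ksets_def)

lemma ksetsD:
  assumes "S \<in> ksets n k"
  shows "S \<subseteq> {1..n}" "card S = k" "finite S"
  using assms by (auto simp: ksets_def intro: finite_subset)

lemma finite_subset_ksets: "F \<subseteq> ksets n k \<Longrightarrow> finite F"
  using finite_ksets finite_subset by blast

lemma cross_intersecting_sym: "cross_intersecting A B \<Longrightarrow> cross_intersecting B A"
  unfolding cross_intersecting_def by blast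

lemma card_ksets_superset_disjoint:
  assumes T: "T \<subseteq> {1..n}" and V: "V \<subseteq> {1..n}" and TV: "T \<inter> V = {}" and "card T \<le> k"
  shows "card {S \<in> ksets n k. T \<subseteq> S \<and> S \<inter> V = {}} = (n - card T - card V) choose (k - card T)"
proof -
  let ?W = "{1..n} - T - V"
  have fin: "finite T" "finite V" using T V finite_subset by blast+
  have card_W: "card ?W = n - card T - card V"
  proof -
    have "?W = {1..n} - (T \<union> V)" by blast
    then show ?thesis using T V TV fin by (simp add: card_Diff_subset card_Un_disjoint)
  qed
  have image: "{S \<in> ksets n k. T \<subseteq> S \<and> S \<inter> V = {}} = (\<lambda>S'. S' \<union> T) ` {S'. S' \<subseteq> ?W \<and> card S' = k - card T}"
  proof (intro set_eqI iffI)
    fix S assume "S \<in> {S \<in> ksets n k. T \<subseteq> S \<and> S \<inter> V = {}}"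
    then have S: "S \<subseteq> {1..n}" "card S = k" "T \<subseteq> S" "S \<inter> V = {}" "finite S"
      by (auto simp: ksets_def intro: finite_subset)
    then have "S = (S - T) \<union> T" "card (S - T) = k - card T" "S - T \<subseteq> ?W"
      by (auto simp: card_Diff_subset fin)
    then show "S \<in> (\<lambda>S'. S' \<union> T) ` {S'. S' \<subseteq> ?W \<and> card S' = k - card T}" by blast
  next
    fix S assume "S \<in> (\<lambda>S'. S' \<union> T) ` {S'. S' \<subseteq> ?W \<and> card S' = k - card T}"
    then obtain S' where S': "S' \<subseteq> ?W" "card S' = k - card T" "S = S' \<union> T" by blast
    have "S' \<inter> T = {}" "finite S'" using S'(1) by (auto intro: finite_subset)
    then have "card S = k" using S' \<open>card T \<le> k\<close> fin by (simp add: card_Un_disjoint)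
    then show "S \<in> {S \<in> ksets n k. T \<subseteq> S \<and> S \<inter> V = {}}" using S' T TV by (auto simp: ksets_def)
  qed
  have inj: "inj_on (\<lambda>S'. S' \<union> T) {S'. S' \<subseteq> ?W \<and> card S' = k - card T}"
    by (rule inj_onI) blast
  show ?thesis
    unfolding image card_image[OF inj] n_subsets[OF finite_Diff[OF finite_Diff[OF finite_atLeastAtMost]]] card_W ..
qed

lemma card_ksets_superset:
  assumes "T \<subseteq> {1..n}" "card T \<le> k"
  shows "card {S \<in> ksets n k. T \<subseteq> S} = (n - card T) choose (k - card T)"
  using card_ksets_superset_disjoint[of T n "{}" k] assms by simp

section \<open>Binomial estimates\<close>

(* The number of k-subsets of {1..n} that contain a fixed point x and meet a fixed w-set W not
   containing x (card_star_hitting): the i-th summand counts those whose first point of W, in a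
   fixed order of W, is the i-th one. *)
definition hitting_count :: "nat \<Rightarrow> nat \<Rightarrow> nat \<Rightarrow> nat" where
  "hitting_count n k w = (\<Sum>i<w. (n - 2 - i) choose (k - 2))"

lemma hitting_count_Suc:
  "hitting_count n k (Suc w) = hitting_count n k w + ((n - 2 - w) choose (k - 2))"
  by (simp add: hitting_count_def)

lemma hitting_count_mono: "v \<le> w \<Longrightarrow> hitting_count n k v \<le> hitting_count n k w"
  unfolding hitting_count_def by (intro sum_mono2) auto

lemma hitting_count_le: "hitting_count n k w \<le> w * ((n - 2) choose (k - 2))"
proof -
  have "hitting_count n k w \<le> (\<Sum>i<w. (n - 2) choose (k - 2))"
    unfolding hitting_count_def by (intro sum_mono binomial_right_mono) simp
  then show ?thesis by simp
qed

lemma choose_eq_hitting_count: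
  assumes "w < n" "2 \<le> k"
  shows "(n - 1) choose (k - 1) = ((n - 1 - w) choose (k - 1)) + hitting_count n k w"
  using assms
proof (induction w)
  case 0
  then show ?case by (simp add: hitting_count_def)
next
  case (Suc w)
  have "n - 1 - w = Suc (n - 2 - w)" "k - 1 = Suc (k - 2)" using Suc.prems by auto
  then have "(n - 1 - w) choose (k - 1) = ((n - 2 - w) choose (k - 1)) + ((n - 2 - w) choose (k - 2))"
    by simp
  moreover have "n - 2 - w = n - 1 - Suc w" by simp
  ultimately show ?case using Suc by (simp add: hitting_count_Suc)
qed

lemma choose_le_shifted_choose:
  assumes "i + j + 2 \<le> n" "3 \<le> k"
  shows "(n - 2 - i) choose (k - 2)
    \<le> ((n - 2 - (i + j)) choose (k - 2)) + j * ((n - 3) choose (k - 3))"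
  using assms
proof (induction j)
  case 0
  then show ?case by simp
next
  case (Suc j)
  have "n - 2 - (i + j) = Suc (n - 2 - (i + Suc j))" "k - 2 = Suc (k - 3)" using Suc.prems by auto
  then have "(n - 2 - (i + j)) choose (k - 2)
      = ((n - 2 - (i + Suc j)) choose (k - 2)) + ((n - 2 - (i + Suc j)) choose (k - 3))"
    by simp
  moreover have "(n - 2 - (i + Suc j)) choose (k - 3) \<le> (n - 3) choose (k - 3)"
    by (rule binomial_right_mono) simp
  ultimately show ?case using Suc by simp
qed

lemma hitting_count_lower:
  assumes "w < n" "3 \<le> k"
  shows "w * ((n - 2) choose (k - 2)) \<le> hitting_count n k w + (\<Sum>i<w. i) * ((n - 3) choose (k - 3))"
proof -
  have "w * ((n - 2) choose (k - 2))
      \<le> (\<Sum>i<w. ((n - 2 - i) choose (k - 2)) + i * ((n - 3) choose (k - 3)))"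
    using sum_mono[of "{..<w}" "\<lambda>_. (n - 2) choose (k - 2)"] choose_le_shifted_choose[of 0 _ n k] assms
    by simp
  then show ?thesis by (simp add: hitting_count_def sum.distrib sum_distrib_right)
qed

lemma hitting_count_double:
  assumes "2 * w + 3 \<le> n" "3 \<le> k"
  shows "2 * hitting_count n k w + ((n - 2) choose (k - 2))
    \<le> hitting_count n k (2 * w + 1) + w * (w + 2) * ((n - 3) choose (k - 3))"
proof -
  let ?g = "\<lambda>i. (n - 2 - i) choose (k - 2)" and ?d = "(n - 3) choose (k - 3)"
  have "hitting_count n k (Suc w + v) = hitting_count n k (Suc w) + (\<Sum>i<v. ?g (w + 1 + i))" for v
    by (induction v) (simp_all add: hitting_count_def)
  moreover have "2 * w + 1 = Suc w + w" by simp
  ultimately have split: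
    "hitting_count n k (2 * w + 1) = hitting_count n k w + ?g w + (\<Sum>i<w. ?g (w + 1 + i))"
    by (simp only: hitting_count_Suc)
  have "hitting_count n k w \<le> (\<Sum>i<w. ?g (w + 1 + i) + (w + 1) * ?d)"
    unfolding hitting_count_def
    using choose_le_shifted_choose[of _ "w + 1" n k] assms by (intro sum_mono) (simp add: add.commute)
  moreover have "?g 0 \<le> ?g w + w * ?d"
    using choose_le_shifted_choose[of 0 w n k] assms by simp
  ultimately show ?thesis
    unfolding split by (simp add: sum.distrib algebra_simps)
qed

lemma choose_diff_le_choose:
  assumes "j \<le> b" "b \<le> a"
  shows "(a - j) choose (b - j) \<le> a choose b"
  using assms
proof (induction j)
  case 0
  then show ?case by simp
next
  case (Suc j)
  have "a - j = Suc (a - Suc j)" "b - j = Suc (b - Suc j)" using Suc.prems by auto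
  then have "(a - Suc j) choose (b - Suc j) \<le> (a - j) choose (b - j)" by simp
  then show ?case using Suc by linarith
qed

lemma choose_shift_le:
  assumes "j \<le> s" "s \<le> k" "k \<le> n"
  shows "(n - s - 1) choose (k - s) \<le> (n - j) choose (k - j)"
proof -
  have "(n - s - 1) choose (k - s) \<le> (n - s) choose (k - s)" by (rule binomial_right_mono) simp
  also have "\<dots> = ((n - j) - (s - j)) choose ((k - j) - (s - j))" using assms by simp
  also have "\<dots> \<le> (n - j) choose (k - j)" using assms by (intro choose_diff_le_choose) auto
  finally show ?thesis .
qed

lemma mult_le_cube:
  fixes m k :: nat
  assumes "m \<le> k"
  shows "m * k \<le> k ^ 3"
proof -
  have "m * k \<le> k * k" using assms by simp
  also have "\<dots> \<le> k * k * k" by (cases k) simp_all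
  finally show ?thesis by (simp add: power3_eq_cube)
qed

lemma choose_ratio_lower:
  fixes n k :: nat
  assumes "5 \<le> k" and "k ^ 3 \<le> n"
  shows "(k ^ 2 + 2 * k + 4) * ((n - 3) choose (k - 3)) \<le> (n - 2) choose (k - 2)"
proof -
  obtain m where k: "k = m + 5" using \<open>5 \<le> k\<close> le_Suc_ex by (metis add.commute)
  let ?\<gamma> = "k ^ 2 + 2 * k + 4" and ?c = "(n - 2) choose (k - 2)" and ?d = "(n - 3) choose (k - 3)"
  have "(m + 3) * ?\<gamma> + 8 = k ^ 3"
    unfolding k by (simp add: algebra_simps power2_eq_square power3_eq_cube)
  then have "(m + 3) * ?\<gamma> \<le> n - 2" using assms(2) by linarith
  then have "(m + 3) * (?\<gamma> * ?d) \<le> (n - 2) * ?d" by (metis mult.assoc mult_le_mono1)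
  also have "(n - 2) * ?d = (m + 3) * ?c"
    using binomial_absorption[of "m + 2" "n - 2"] unfolding k by (simp add: numeral_eq_Suc)
  finally show ?thesis by simp
qed

(* All numerical estimates of the upper bound have this form, with w = 2k - 1, the lower bound for
   X from hitting_count_lower_odd and gamma = k^2 + 2k + 4 from choose_ratio_lower. *)
lemma twice_le_of_weighted_bounds:
  fixes a b c d e s w X \<gamma> :: nat
  assumes c: "\<gamma> * d \<le> c" and X: "w * c \<le> X + e * d"
    and w: "2 * a + s = w" and b: "2 * b + e \<le> s * \<gamma>"
  shows "2 * (a * c + b * d) \<le> X"
proof -
  have "(2 * b + e) * d \<le> s * (\<gamma> * d)" using b by (simp add: mult_le_mono1)
  also have "\<dots> \<le> s * c" using c by simp
  finally have "2 * (a * c + b * d) + e * d \<le> w * c" unfolding w[symmetric] by (simp add: algebra_simps)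
  then show ?thesis using X by linarith
qed

lemma hitting_count_lower_odd:
  assumes "2 * k \<le> n" "3 \<le> k"
  shows "(2 * k - 1) * ((n - 2) choose (k - 2))
    \<le> hitting_count n k (2 * k - 1) + (2 * k - 1) * (k - 1) * ((n - 3) choose (k - 3))"
proof -
  obtain j where "k = Suc j" using assms(2) by (cases k) auto
  then have j: "2 * k - 1 = Suc (2 * j)" "k - 1 = j" by simp_all
  have "2 * (\<Sum>i<Suc (2 * j). i) = 2 * j * (2 * j + 1)"
    using double_gauss_sum[where 'a = nat, of "2 * j"] by (simp add: lessThan_Suc_atMost atLeast0AtMost)
  then have "(\<Sum>i<2 * k - 1. i) = (2 * k - 1) * (k - 1)" unfolding j by simp
  then show ?thesis using hitting_count_lower[of "2 * k - 1" n k] assms by simp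
qed

lemma hitting_count_bounds:
  fixes n k :: nat
  assumes k: "5 \<le> k" and n: "k ^ 3 \<le> n"
  defines "c \<equiv> (n - 2) choose (k - 2)" and "d \<equiv> (n - 3) choose (k - 3)"
    and "X \<equiv> hitting_count n k (2 * k - 1)"
  shows "2 * (k ^ 3 * d) \<le> X"
    and "4 * (c + k ^ 2 * d) \<le> X"
    and "2 * (3 * c + (k - 2) ^ 2 * d) \<le> X"
    and "\<And>r. 3 \<le> r \<Longrightarrow> r + 2 \<le> k \<Longrightarrow> 2 * (r * c + ((k - r) ^ 2 + 1) * d) \<le> X"
proof -
  \<comment> \<open>With k = m + 5 every side condition compares polynomials in m with nonnegative coefficients.\<close>
  obtain m where m: "k = m + 5" using k le_Suc_ex by (metis add.commute)
  define \<gamma> where "\<gamma> = (m + 5) ^ 2 + 2 * (m + 5) + 4"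
  have c: "\<gamma> * d \<le> c" using choose_ratio_lower[OF k n] unfolding \<gamma>_def c_def d_def m .
  have "(2 * k - 1) * c \<le> X + (2 * k - 1) * (k - 1) * d"
    unfolding c_def d_def X_def using mult_le_cube[of 3 k] k n by (intro hitting_count_lower_odd) auto
  then have X: "(2 * m + 9) * c \<le> X + ((2 * m + 9) * (m + 4)) * d" unfolding m by (simp add: algebra_simps)
  have "2 * (m + 5) ^ 3 + (2 * m + 9) * (m + 4) \<le> (2 * m + 9) * \<gamma>"
    unfolding \<gamma>_def by (simp add: algebra_simps power2_eq_square power3_eq_cube)
  from twice_le_of_weighted_bounds[OF c X _ this, of 0] show "2 * (k ^ 3 * d) \<le> X"
    unfolding m by simp
  have "2 * (2 * (m + 5) ^ 2) + (2 * m + 9) * (m + 4) \<le> (2 * m + 5) * \<gamma>"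
    unfolding \<gamma>_def by (simp add: algebra_simps power2_eq_square power3_eq_cube)
  from twice_le_of_weighted_bounds[OF c X _ this, of 2] show "4 * (c + k ^ 2 * d) \<le> X"
    unfolding m by simp
  have "2 * (m + 3) ^ 2 + (2 * m + 9) * (m + 4) \<le> (2 * m + 3) * \<gamma>"
    unfolding \<gamma>_def by (simp add: algebra_simps power2_eq_square power3_eq_cube)
  from twice_le_of_weighted_bounds[OF c X _ this, of 3] show "2 * (3 * c + (k - 2) ^ 2 * d) \<le> X"
    using m by (simp add: add.commute[of 3 m])
  show "2 * (r * c + ((k - r) ^ 2 + 1) * d) \<le> X" if "3 \<le> r" "r + 2 \<le> k" for r
  proof -
    define p q where "p = r - 3" and "q = m - p"
    then have r: "r = p + 3" and mpq: "m = p + q" using that m by auto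
    have "2 * ((q + 2) ^ 2 + 1) + (2 * m + 9) * (m + 4) \<le> (2 * q + 3) * \<gamma>"
      unfolding \<gamma>_def mpq by (simp add: algebra_simps power2_eq_square power3_eq_cube)
    from twice_le_of_weighted_bounds[OF c X _ this, of r] show ?thesis
      unfolding m r mpq by simp
  qed
qed

lemma hitting_count_tail_bounds:
  fixes n k :: nat
  assumes k: "5 \<le> k" and n: "k ^ 3 \<le> n"
  defines "d \<equiv> (n - 3) choose (k - 3)" and "X \<equiv> hitting_count n k (2 * k - 1)"
  shows "2 * hitting_count n k (k - 1) + 2 * d \<le> X"
    and "hitting_count n k (2 * k - 2) + 4 * d \<le> X"
proof -
  obtain m where m: "k = m + 5" using k le_Suc_ex by (metis add.commute)
  let ?c = "(n - 2) choose (k - 2)"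
  have c: "((m + 5) ^ 2 + 2 * (m + 5) + 4) * d \<le> ?c"
    using choose_ratio_lower[OF k n] unfolding d_def m .
  have n_large: "3 * k \<le> n" using mult_le_cube[of 3 k] k n by linarith
  have "2 * hitting_count n k (m + 4) + ?c \<le> hitting_count n k (2 * (m + 4) + 1) + (m + 4) * (m + 4 + 2) * d"
    unfolding d_def using n_large m by (intro hitting_count_double) auto
  moreover have "((m + 4) * (m + 4 + 2) + 2) * d \<le> ((m + 5) ^ 2 + 2 * (m + 5) + 4) * d"
    by (intro mult_le_mono1) (simp add: power2_eq_square algebra_simps)
  ultimately show "2 * hitting_count n k (k - 1) + 2 * d \<le> X"
    using c unfolding X_def m by (simp add: algebra_simps)
  have "?c \<le> ((n - 2 - (2 * m + 8)) choose (k - 2)) + (2 * m + 8) * d"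
    using choose_le_shifted_choose[of 0 "2 * m + 8" n k] n_large m unfolding d_def by simp
  moreover have "(2 * m + 12) * d \<le> ((m + 5) ^ 2 + 2 * (m + 5) + 4) * d"
    by (intro mult_le_mono1) (simp add: power2_eq_square algebra_simps)
  moreover have "X = hitting_count n k (2 * m + 8) + ((n - 2 - (2 * m + 8)) choose (k - 2))"
    unfolding X_def m by (simp add: hitting_count_Suc numeral_eq_Suc)
  ultimately show "hitting_count n k (2 * k - 2) + 4 * d \<le> X"
    using c unfolding m by (simp add: algebra_simps)
qed

section \<open>k-sets through a point\<close>

definition star_hitting :: "nat \<Rightarrow> nat \<Rightarrow> nat \<Rightarrow> nat set \<Rightarrow> nat set set" where
  "star_hitting n k x W = {S \<in> ksets n k. x \<in> S \<and> S \<inter> W \<noteq> {}}"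

definition star_transversals :: "nat \<Rightarrow> nat \<Rightarrow> nat \<Rightarrow> nat set set \<Rightarrow> nat set set" where
  "star_transversals n k x P = {S \<in> ksets n k. x \<in> S \<and> (\<forall>F\<in>P. S \<inter> F \<noteq> {})}"

lemma star_hitting_subset_ksets: "star_hitting n k x W \<subseteq> ksets n k"
  by (auto simp: star_hitting_def)

lemma star_transversals_subset_ksets: "star_transversals n k x P \<subseteq> ksets n k"
  by (auto simp: star_transversals_def)

lemma star_hitting_Un: "star_hitting n k x (T \<union> T') = star_hitting n k x T \<union> star_hitting n k x T'"
  by (auto simp: star_hitting_def)

lemma card_star_hitting:
  assumes "W \<subseteq> {1..n}" "x \<in> {1..n}" "x \<notin> W" "2 \<le> k"
  shows "card (star_hitting n k x W) = hitting_count n k (card W)"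
proof -
  have "finite W" using assms(1) finite_subset by blast
  then show ?thesis using assms
  proof (induction W rule: finite_induct)
    case empty
    then show ?case by (simp add: star_hitting_def hitting_count_def)
  next
    case (insert w W)
    let ?new = "{S \<in> ksets n k. {x, w} \<subseteq> S \<and> S \<inter> W = {}}"
    have "star_hitting n k x (insert w W) = star_hitting n k x W \<union> ?new"
      "star_hitting n k x W \<inter> ?new = {}"
      by (auto simp: star_hitting_def)
    moreover have "card ?new = (n - 2 - card W) choose (k - 2)"
      using card_ksets_superset_disjoint[of "{x, w}" n W k] insert by (auto simp: numeral_2_eq_2)
    ultimately have "card (star_hitting n k x (insert w W))
        = card (star_hitting n k x W) + ((n - 2 - card W) choose (k - 2))"
      by (simp add: card_Un_disjoint finite_ksets star_hitting_def)
    then show ?case using insert by (simp add: hitting_count_Suc)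
  qed
qed

lemma card_star_hitting_Diff:
  assumes "T \<subseteq> {1..n}" "T' \<subseteq> {1..n}" "x \<in> {1..n}" "x \<notin> T \<union> T'" "2 \<le> k"
  shows "card (star_hitting n k x T - star_hitting n k x T')
    = hitting_count n k (card (T \<union> T')) - hitting_count n k (card T')"
proof -
  let ?H = "star_hitting n k x T" and ?H' = "star_hitting n k x T'"
  have fin: "finite ?H" "finite ?H'"
    using finite_subset_ksets[OF star_hitting_subset_ksets] by auto
  have "card ((?H - ?H') \<union> ?H') = card (?H - ?H') + card ?H'"
    using fin by (intro card_Un_disjoint) auto
  then have "card (?H - ?H') = card (star_hitting n k x (T \<union> T')) - card ?H'"
    unfolding star_hitting_Un by simp
  also have "\<dots> = hitting_count n k (card (T \<union> T')) - hitting_count n k (card T')"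
    using assms by (simp add: card_star_hitting)
  finally show ?thesis .
qed

lemma card_le_triple_cover:
  assumes B: "B \<subseteq> ksets n k" and "finite I" and t: "\<And>i. i \<in> I \<Longrightarrow> t i \<subseteq> {1..n} \<and> card (t i) = 3"
    and cover: "\<And>S. S \<in> B \<Longrightarrow> \<exists>i\<in>I. t i \<subseteq> S" and "3 \<le> k"
  shows "card B \<le> card I * ((n - 3) choose (k - 3))"
proof -
  have "B \<subseteq> (\<Union>i\<in>I. {S \<in> ksets n k. t i \<subseteq> S})" using B cover by blast
  then have "card B \<le> card (\<Union>i\<in>I. {S \<in> ksets n k. t i \<subseteq> S})"
    using \<open>finite I\<close> by (intro card_mono) (simp_all add: finite_ksets)
  also have "\<dots> \<le> (\<Sum>i\<in>I. card {S \<in> ksets n k. t i \<subseteq> S})"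
    using \<open>finite I\<close> by (rule card_UN_le)
  also have "\<dots> = (\<Sum>i\<in>I. (n - 3) choose (k - 3))"
    using t \<open>3 \<le> k\<close> by (intro sum.cong) (auto simp: card_ksets_superset)
  finally show ?thesis by simp
qed

(* Each member of B contains a point a of a fixed member of A, a point b of a member avoiding a,
   and a point of a member avoiding a and b. *)
lemma card_le_of_no_double_cover:
  assumes A: "A \<subseteq> ksets n k" and uncovered: "\<forall>a b. \<exists>F\<in>A. a \<notin> F \<and> b \<notin> F"
    and B: "B \<subseteq> ksets n k" and cross: "cross_intersecting A B" and "3 \<le> k"
  shows "card B \<le> k ^ 3 * ((n - 3) choose (k - 3))"
proof -
  obtain F1 where F1: "F1 \<in> A" using uncovered by blast
  obtain G where G: "\<And>a. G a \<in> A \<and> a \<notin> G a" using uncovered by metis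
  obtain H where H: "\<And>a b. H a b \<in> A \<and> a \<notin> H a b \<and> b \<notin> H a b" using uncovered by metis
  have A_ksets: "F \<subseteq> {1..n}" "card F = k" "finite F" if "F \<in> A" for F
    using that A ksetsD by blast+
  have fin: "finite F1" "finite (G a)" "finite (H a b)" for a b
    using A_ksets F1 G H by blast+
  let ?I = "SIGMA a:F1. SIGMA b:G a. H a b"
  have "card B \<le> card ?I * ((n - 3) choose (k - 3))"
  proof (rule card_le_triple_cover[OF B _ _ _ \<open>3 \<le> k\<close>])
    show "finite ?I" by (intro finite_SigmaI fin)
    fix i assume "i \<in> ?I"
    then obtain a b c where i: "i = (a, b, c)" and abc: "a \<in> F1" "b \<in> G a" "c \<in> H a b" by auto
    have "a \<noteq> b" "a \<noteq> c" "b \<noteq> c" using abc G[of a] H[of a b] by auto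
    moreover have "{a, b, c} \<subseteq> {1..n}" using abc A_ksets F1 G H by blast
    ultimately show "(\<lambda>(a, b, c). {a, b, c}) i \<subseteq> {1..n} \<and> card ((\<lambda>(a, b, c). {a, b, c}) i) = 3"
      unfolding i by simp
  next
    fix S assume "S \<in> B"
    then have meets: "S \<inter> F \<noteq> {}" if "F \<in> A" for F
      using cross that unfolding cross_intersecting_def by blast
    obtain a where "a \<in> S" "a \<in> F1" using meets[OF F1] by blast
    moreover obtain b where "b \<in> S" "b \<in> G a" using meets G by blast
    moreover obtain c where "c \<in> S" "c \<in> H a b" using meets H by blast
    ultimately show "\<exists>i\<in>?I. (\<lambda>(a, b, c). {a, b, c}) i \<subseteq> S" by (intro bexI[of _ "(a, b, c)"]) auto
  qed
  also have "card ?I = k ^ 3" using fin A_ksets F1 G H by (simp add: power3_eq_cube)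
  finally show ?thesis .
qed

lemma Inter_ksets:
  assumes "P \<noteq> {}" "P \<subseteq> ksets n k"
  shows "\<Inter>P \<subseteq> {1..n}" "finite (\<Inter>P)" "card (\<Inter>P) \<le> k"
proof -
  obtain F where F: "F \<in> P" using assms(1) by blast
  then have "\<Inter>P \<subseteq> F" "F \<subseteq> {1..n}" "finite F" "card F = k" using assms(2) ksetsD by blast+
  then show "\<Inter>P \<subseteq> {1..n}" "finite (\<Inter>P)" "card (\<Inter>P) \<le> k"
    using finite_subset card_mono by blast+
qed

lemma Inter_eq_of_card_eq:
  assumes "F \<in> P" "P \<subseteq> ksets n k" "card (\<Inter>P) = k"
  shows "\<Inter>P = F"
  using assms ksetsD[of F n k] by (metis Inter_lower card_subset_eq subsetD)

lemma card_le_choose_Inter: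
  assumes P: "P \<noteq> {}" "P \<subseteq> ksets n k" and x: "x \<in> {1..n}" "\<forall>F\<in>P. x \<notin> F"
  shows "card P \<le> (n - card (\<Inter>P) - 1) choose (k - card (\<Inter>P))"
proof -
  have "P \<subseteq> {S \<in> ksets n k. \<Inter>P \<subseteq> S \<and> S \<inter> {x} = {}}" using P x by blast
  then have "card P \<le> card {S \<in> ksets n k. \<Inter>P \<subseteq> S \<and> S \<inter> {x} = {}}"
    by (intro card_mono) (simp_all add: finite_ksets)
  also have "\<dots> = (n - card (\<Inter>P) - 1) choose (k - card (\<Inter>P))"
    using P x Inter_ksets[OF P] by (subst card_ksets_superset_disjoint) auto
  finally show ?thesis .
qed

(* A transversal through x that misses the core contains x, a point u of a fixed member of P
   outside the core, and a point outside the core of a member of P avoiding u. *)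
lemma card_star_transversals_avoiding_Inter:
  assumes P: "P \<noteq> {}" "P \<subseteq> ksets n k" and x: "x \<in> {1..n}" "\<forall>F\<in>P. x \<notin> F" and "3 \<le> k"
  shows "card {S \<in> star_transversals n k x P. S \<inter> \<Inter>P = {}}
    \<le> (k - card (\<Inter>P)) ^ 2 * ((n - 3) choose (k - 3))"
proof -
  let ?R = "\<Inter>P"
  obtain F1 where F1: "F1 \<in> P" using P by blast
  have "\<forall>u\<in>F1 - ?R. \<exists>F\<in>P. u \<notin> F" by blast
  then obtain G where G: "\<And>u. u \<in> F1 - ?R \<Longrightarrow> G u \<in> P \<and> u \<notin> G u" by metis
  have P_ksets: "F \<subseteq> {1..n}" "finite F" "card (F - ?R) = k - card ?R" if "F \<in> P" for F
    using that P ksetsD[of F n k] Inter_ksets[OF P] by (auto simp: card_Diff_subset Inter_lower)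
  let ?I = "SIGMA u:F1 - ?R. G u - ?R"
  have fin: "finite (F1 - ?R)" "u \<in> F1 - ?R \<Longrightarrow> finite (G u - ?R)" for u
    using P_ksets F1 G by auto
  have "card {S \<in> star_transversals n k x P. S \<inter> ?R = {}} \<le> card ?I * ((n - 3) choose (k - 3))"
  proof (rule card_le_triple_cover[OF _ _ _ _ \<open>3 \<le> k\<close>])
    show "{S \<in> star_transversals n k x P. S \<inter> ?R = {}} \<subseteq> ksets n k"
      using star_transversals_subset_ksets by blast
    show "finite ?I" by (intro finite_SigmaI fin)
    fix i assume "i \<in> ?I"
    then obtain u v where i: "i = (u, v)" and uv: "u \<in> F1 - ?R" "v \<in> G u - ?R" by auto
    have "x \<noteq> u" "x \<noteq> v" "u \<noteq> v" using uv F1 G[of u] x by auto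
    moreover have "{x, u, v} \<subseteq> {1..n}" using uv F1 G[of u] P_ksets x by blast
    ultimately show "(\<lambda>(u, v). {x, u, v}) i \<subseteq> {1..n} \<and> card ((\<lambda>(u, v). {x, u, v}) i) = 3"
      unfolding i by simp
  next
    fix S assume S: "S \<in> {S \<in> star_transversals n k x P. S \<inter> ?R = {}}"
    then have "S \<inter> F1 \<noteq> {}" "S \<inter> ?R = {}" using F1 by (auto simp: star_transversals_def)
    then obtain u where u: "u \<in> S" "u \<in> F1 - ?R" by blast
    moreover have "S \<inter> G u \<noteq> {}" using S G[OF u(2)] by (auto simp: star_transversals_def)
    then obtain v where "v \<in> S" "v \<in> G u - ?R" using \<open>S \<inter> ?R = {}\<close> by blast
    ultimately show "\<exists>i\<in>?I. (\<lambda>(u, v). {x, u, v}) i \<subseteq> S"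
      using S by (intro bexI[of _ "(u, v)"]) (auto simp: star_transversals_def)
  qed
  also have "card ?I = (\<Sum>u\<in>F1 - ?R. card (G u - ?R))" using fin by (intro card_SigmaI) auto
  also have "\<dots> = (\<Sum>u\<in>F1 - ?R. k - card ?R)" using P_ksets G by (intro sum.cong) auto
  also have "\<dots> = (k - card ?R) ^ 2" using P_ksets F1 by (simp add: power2_eq_square)
  finally show ?thesis by simp
qed

lemma star_transversals_subset:
  assumes "W \<subseteq> W'"
  shows "star_transversals n k x P \<subseteq> star_hitting n k x W' \<union> {S \<in> star_transversals n k x P. S \<inter> W = {}}"
  using assms unfolding star_transversals_def star_hitting_def by blast

lemma card_star_transversals_le:
  assumes P: "P \<noteq> {}" "P \<subseteq> ksets n k" and x: "x \<in> {1..n}" "\<forall>F\<in>P. x \<notin> F" and "3 \<le> k"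
  shows "card (star_transversals n k x P)
    \<le> hitting_count n k (card (\<Inter>P)) + (k - card (\<Inter>P)) ^ 2 * ((n - 3) choose (k - 3))"
proof -
  let ?E = "{S \<in> star_transversals n k x P. S \<inter> \<Inter>P = {}}"
  have "finite (star_hitting n k x (\<Inter>P) \<union> ?E)"
    using star_hitting_subset_ksets star_transversals_subset_ksets
    by (intro finite_subset_ksets[of _ n k]) blast
  then have "card (star_transversals n k x P) \<le> card (star_hitting n k x (\<Inter>P) \<union> ?E)"
    using star_transversals_subset[OF subset_refl, of n k x P] by (rule card_mono)
  also have "\<dots> \<le> card (star_hitting n k x (\<Inter>P)) + card ?E" by (rule card_Un_le)
  also have "card (star_hitting n k x (\<Inter>P)) = hitting_count n k (card (\<Inter>P))"
    using Inter_ksets[OF P] x P(1) assms(5) by (intro card_star_hitting) auto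
  finally show ?thesis
    using card_star_transversals_avoiding_Inter[OF assms] by linarith
qed

lemma through_subset_star_transversals:
  assumes "B \<subseteq> ksets n k" "cross_intersecting A B"
  shows "{F \<in> B. x \<in> F} \<subseteq> star_transversals n k x {F \<in> A. x \<notin> F}"
  using assms unfolding star_transversals_def cross_intersecting_def by blast

section \<open>The upper bound\<close>

lemma card_through_add_avoiding:
  assumes "finite A"
  shows "card A = card {F \<in> A. x \<in> F} + card {F \<in> A. x \<notin> F}"
proof -
  have "card ({F \<in> A. x \<in> F} \<union> {F \<in> A. x \<notin> F}) = card {F \<in> A. x \<in> F} + card {F \<in> A. x \<notin> F}"
    using assms by (intro card_Un_disjoint) auto
  moreover have "{F \<in> A. x \<in> F} \<union> {F \<in> A. x \<notin> F} = A" by blast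
  ultimately show ?thesis by simp
qed

lemma not_star_avoiding:
  assumes "F \<subseteq> ksets n k" "\<not> is_star n F" "1 \<le> n"
  shows "\<exists>G\<in>F. y \<notin> G"
proof (cases "y \<in> {1..n}")
  case True
  then show ?thesis using assms(2) unfolding is_star_def by blast
next
  case False
  have "F \<noteq> {}" using assms(2,3) unfolding is_star_def by auto
  then obtain G where "G \<in> F" by blast
  moreover have "G \<subseteq> {1..n}" using calculation assms(1) by (auto simp: ksets_def)
  ultimately show ?thesis using False by blast
qed

lemma exists_half_through:
  assumes "finite A" "\<forall>F\<in>A. a \<in> F \<or> b \<in> F"
  shows "\<exists>x. card A \<le> 2 * card {F \<in> A. x \<in> F}"
proof -
  have "card A \<le> card ({F \<in> A. a \<in> F} \<union> {F \<in> A. b \<in> F})"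
    using assms by (intro card_mono) auto
  also have "\<dots> \<le> card {F \<in> A. a \<in> F} + card {F \<in> A. b \<in> F}" by (rule card_Un_le)
  finally have "card A \<le> 2 * card {F \<in> A. a \<in> F} \<or> card A \<le> 2 * card {F \<in> A. b \<in> F}"
    by linarith
  then show ?thesis by blast
qed

lemma card_through_le:
  assumes A: "A \<subseteq> ksets n k" and B: "B \<subseteq> ksets n k" and cross: "cross_intersecting A B"
    and x: "x \<in> {1..n}" and P: "{F \<in> A. x \<notin> F} \<noteq> {}" and "3 \<le> k"
  shows "card {F \<in> B. x \<in> F} \<le> hitting_count n k (card (\<Inter>{F \<in> A. x \<notin> F}))
    + (k - card (\<Inter>{F \<in> A. x \<notin> F})) ^ 2 * ((n - 3) choose (k - 3))"
proof -
  have "card {F \<in> B. x \<in> F} \<le> card (star_transversals n k x {F \<in> A. x \<notin> F})"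
    using through_subset_star_transversals[OF B cross]
    by (intro card_mono) (auto simp: star_transversals_def intro: finite_subset[OF _ finite_ksets])
  also have "\<dots> \<le> hitting_count n k (card (\<Inter>{F \<in> A. x \<notin> F}))
      + (k - card (\<Inter>{F \<in> A. x \<notin> F})) ^ 2 * ((n - 3) choose (k - 3))"
    using A P x \<open>3 \<le> k\<close> by (intro card_star_transversals_le) auto
  finally show ?thesis .
qed

lemma card_avoiding_le:
  assumes B: "B \<subseteq> ksets n k" and x: "x \<in> {1..n}" and Q: "{F \<in> B. x \<notin> F} \<noteq> {}"
    and "j \<le> card (\<Inter>{F \<in> B. x \<notin> F})" and "k \<le> n"
  shows "card {F \<in> B. x \<notin> F} \<le> (n - j) choose (k - j)"
proof -
  have Q_ksets: "{F \<in> B. x \<notin> F} \<subseteq> ksets n k" using B by blast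
  have "card {F \<in> B. x \<notin> F}
      \<le> (n - card (\<Inter>{F \<in> B. x \<notin> F}) - 1) choose (k - card (\<Inter>{F \<in> B. x \<notin> F}))"
    using card_le_choose_Inter[OF Q Q_ksets x] by blast
  also have "\<dots> \<le> (n - j) choose (k - j)"
    using assms Inter_ksets(3)[OF Q Q_ksets] by (intro choose_shift_le) auto
  finally show ?thesis .
qed

lemma two_le_card_Inter_of_large_through:
  assumes A: "A \<subseteq> ksets n k" and B: "B \<subseteq> ksets n k" and cross: "cross_intersecting A B"
    and x: "x \<in> {1..n}" and P: "{F \<in> A. x \<notin> F} \<noteq> {}" and "3 \<le> k"
    and large: "((n - 2) choose (k - 2)) + k ^ 2 * ((n - 3) choose (k - 3)) < card {F \<in> B. x \<in> F}"
  shows "2 \<le> card (\<Inter>{F \<in> A. x \<notin> F})"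
proof (rule ccontr)
  let ?r = "card (\<Inter>{F \<in> A. x \<notin> F})"
  assume "\<not> 2 \<le> ?r"
  then have "hitting_count n k ?r \<le> hitting_count n k 1" by (intro hitting_count_mono) simp
  also have "\<dots> = (n - 2) choose (k - 2)" by (simp add: hitting_count_def)
  finally have "card {F \<in> B. x \<in> F} \<le> ((n - 2) choose (k - 2)) + (k - ?r) ^ 2 * ((n - 3) choose (k - 3))"
    using card_through_le[OF A B cross x P \<open>3 \<le> k\<close>] by linarith
  moreover have "(k - ?r) ^ 2 * ((n - 3) choose (k - 3)) \<le> k ^ 2 * ((n - 3) choose (k - 3))"
    by (intro mult_le_mono1 power_mono) auto
  ultimately show False using large by linarith
qed

lemma card_through_add_le:
  assumes A: "A \<subseteq> ksets n k" and B: "B \<subseteq> ksets n k" and disjoint: "A \<inter> B = {}"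
    and cross: "cross_intersecting A B" and x: "x \<in> {1..n}"
    and P: "{F \<in> A. x \<notin> F} \<noteq> {}" and Q: "{F \<in> B. x \<notin> F} \<noteq> {}" and "3 \<le> k"
  defines "R \<equiv> \<Inter>{F \<in> A. x \<notin> F}" and "S \<equiv> \<Inter>{F \<in> B. x \<notin> F}"
  shows "card {F \<in> A. x \<in> F} + card {F \<in> B. x \<in> F} \<le> hitting_count n k (card (R \<union> S))
    + (k - card R) ^ 2 * ((n - 3) choose (k - 3)) + (k - card S) ^ 2 * ((n - 3) choose (k - 3))"
proof -
  let ?H = "star_hitting n k x (R \<union> S)"
  let ?EP = "{T \<in> star_transversals n k x {F \<in> A. x \<notin> F}. T \<inter> R = {}}"
  let ?EQ = "{T \<in> star_transversals n k x {F \<in> B. x \<notin> F}. T \<inter> S = {}}"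
  have P_ksets: "{F \<in> A. x \<notin> F} \<subseteq> ksets n k" and Q_ksets: "{F \<in> B. x \<notin> F} \<subseteq> ksets n k"
    using A B by auto
  have "{F \<in> A. x \<in> F} \<subseteq> ?H \<union> ?EQ"
    using through_subset_star_transversals[OF A cross_intersecting_sym[OF cross]]
      star_transversals_subset[of S "R \<union> S" n k x "{F \<in> B. x \<notin> F}"] by blast
  moreover have "{F \<in> B. x \<in> F} \<subseteq> ?H \<union> ?EP"
    using through_subset_star_transversals[OF B cross]
      star_transversals_subset[of R "R \<union> S" n k x "{F \<in> A. x \<notin> F}"] by blast
  moreover have "finite (?H \<union> ?EP \<union> ?EQ)"
    using star_hitting_subset_ksets star_transversals_subset_ksets
    by (intro finite_subset_ksets[of _ n k]) blast
  ultimately have "card ({F \<in> A. x \<in> F} \<union> {F \<in> B. x \<in> F}) \<le> card (?H \<union> ?EP \<union> ?EQ)"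
    by (intro card_mono) blast+
  also have "\<dots> \<le> card ?H + card ?EP + card ?EQ"
    using card_Un_le[of "?H \<union> ?EP" ?EQ] card_Un_le[of ?H ?EP] by linarith
  finally have "card ({F \<in> A. x \<in> F} \<union> {F \<in> B. x \<in> F}) \<le> card ?H + card ?EP + card ?EQ" .
  moreover have "card ({F \<in> A. x \<in> F} \<union> {F \<in> B. x \<in> F}) = card {F \<in> A. x \<in> F} + card {F \<in> B. x \<in> F}"
    using disjoint finite_subset_ksets[OF A] finite_subset_ksets[OF B] by (intro card_Un_disjoint) auto
  moreover have "card ?H = hitting_count n k (card (R \<union> S))"
  proof (rule card_star_hitting)
    show "R \<union> S \<subseteq> {1..n}" using Inter_ksets(1)[OF P P_ksets] Inter_ksets(1)[OF Q Q_ksets]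
      unfolding R_def S_def by (rule Un_least)
    show "x \<notin> R \<union> S" using P Q unfolding R_def S_def by blast
  qed (use x \<open>3 \<le> k\<close> in auto)
  moreover have "card ?EP \<le> (k - card R) ^ 2 * ((n - 3) choose (k - 3))"
    unfolding R_def by (rule card_star_transversals_avoiding_Inter[OF P P_ksets x _ \<open>3 \<le> k\<close>]) blast
  moreover have "card ?EQ \<le> (k - card S) ^ 2 * ((n - 3) choose (k - 3))"
    unfolding S_def by (rule card_star_transversals_avoiding_Inter[OF Q Q_ksets x _ \<open>3 \<le> k\<close>]) blast
  ultimately show ?thesis by linarith
qed

lemma card_le_of_small_core:
  fixes n k :: nat
  assumes k: "5 \<le> k" and n: "k ^ 3 \<le> n"
    and A: "A \<subseteq> ksets n k" and B: "B \<subseteq> ksets n k" and cross: "cross_intersecting A B"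
    and x: "x \<in> {1..n}" and P: "{F \<in> A. x \<notin> F} \<noteq> {}" and Q: "{F \<in> B. x \<notin> F} \<noteq> {}"
  defines "r \<equiv> card (\<Inter>{F \<in> A. x \<notin> F})"
  assumes r: "2 \<le> r" "r + 2 \<le> k" "r \<le> card (\<Inter>{F \<in> B. x \<notin> F})"
  shows "2 * card B \<le> hitting_count n k (2 * k - 1)"
proof -
  define c d where "c = (n - 2) choose (k - 2)" and "d = (n - 3) choose (k - 3)"
  have "k \<le> n" using mult_le_cube[of 1 k] k n by linarith
  have "card {F \<in> B. x \<in> F} \<le> hitting_count n k r + (k - r) ^ 2 * d"
    unfolding r_def d_def using card_through_le[OF A B cross x P] k by simp
  also have "hitting_count n k r \<le> r * c" unfolding c_def by (rule hitting_count_le)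
  finally have card_B: "card B \<le> r * c + (k - r) ^ 2 * d + card {F \<in> B. x \<notin> F}"
    using card_through_add_avoiding[OF finite_subset_ksets[OF B], of x] by linarith
  show ?thesis
  proof (cases "r = 2")
    case True
    have "card {F \<in> B. x \<notin> F} \<le> c"
      unfolding c_def using card_avoiding_le[OF B x Q _ \<open>k \<le> n\<close>, of 2] r by simp
    then have "2 * card B \<le> 2 * (3 * c + (k - 2) ^ 2 * d)" using card_B True by simp
    also have "\<dots> \<le> hitting_count n k (2 * k - 1)"
      using hitting_count_bounds(3)[OF k n] unfolding c_def d_def .
    finally show ?thesis .
  next
    case False
    have "card {F \<in> B. x \<notin> F} \<le> d"
      unfolding d_def using card_avoiding_le[OF B x Q _ \<open>k \<le> n\<close>, of 3] r False by simp
    then have "card B \<le> r * c + ((k - r) ^ 2 + 1) * d"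
      using card_B add_mult_distrib[of "(k - r) ^ 2" 1 d] by linarith
    then have "2 * card B \<le> 2 * (r * c + ((k - r) ^ 2 + 1) * d)" by (rule mult_le_mono2)
    also have "\<dots> \<le> hitting_count n k (2 * k - 1)"
      unfolding c_def d_def using r False by (intro hitting_count_bounds(4)[OF k n]) auto
    finally show ?thesis .
  qed
qed

lemma card_add_card_le_of_full_cores:
  assumes "3 \<le> k" "k \<le> n"
    and A: "A \<subseteq> ksets n k" and B: "B \<subseteq> ksets n k" and disjoint: "A \<inter> B = {}"
    and cross: "cross_intersecting A B"
    and x: "x \<in> {1..n}" and P: "{F \<in> A. x \<notin> F} \<noteq> {}" and Q: "{F \<in> B. x \<notin> F} \<noteq> {}"
  defines "R \<equiv> \<Inter>{F \<in> A. x \<notin> F}" and "S \<equiv> \<Inter>{F \<in> B. x \<notin> F}"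
  assumes full: "card R = k" "card S = k"
  shows "card A + card B \<le> hitting_count n k (2 * k - 1) + 2"
proof -
  obtain F G where F: "F \<in> {F \<in> A. x \<notin> F}" and G: "G \<in> {F \<in> B. x \<notin> F}" using P Q by blast
  have "{F \<in> A. x \<notin> F} \<subseteq> ksets n k" "{F \<in> B. x \<notin> F} \<subseteq> ksets n k" using A B by auto
  then have "R = F" "S = G"
    using Inter_eq_of_card_eq[OF F] Inter_eq_of_card_eq[OF G] full unfolding R_def S_def by blast+
  then have "R \<inter> S \<noteq> {}" using F G cross unfolding cross_intersecting_def by blast
  moreover have "finite R" "finite S" using \<open>R = F\<close> \<open>S = G\<close> F G A B ksetsD(3) by blast+
  ultimately have "card (R \<inter> S) \<noteq> 0" by simp
  then have "card (R \<union> S) \<le> 2 * k - 1" using card_Un_Int[OF \<open>finite R\<close> \<open>finite S\<close>] full by linarith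
  then have "hitting_count n k (card (R \<union> S)) \<le> hitting_count n k (2 * k - 1)"
    by (rule hitting_count_mono)
  moreover have "card {F \<in> A. x \<in> F} + card {F \<in> B. x \<in> F} \<le> hitting_count n k (card (R \<union> S))"
    using card_through_add_le[OF A B disjoint cross x P Q \<open>3 \<le> k\<close>] full unfolding R_def S_def by simp
  moreover have "card {F \<in> A. x \<notin> F} \<le> 1" "card {F \<in> B. x \<notin> F} \<le> 1"
    using card_avoiding_le[OF A x P _ \<open>k \<le> n\<close>, of k] card_avoiding_le[OF B x Q _ \<open>k \<le> n\<close>, of k] full
    unfolding R_def S_def by simp_all
  ultimately show ?thesis
    using card_through_add_avoiding[OF finite_subset_ksets[OF A], of x]
      card_through_add_avoiding[OF finite_subset_ksets[OF B], of x] by linarith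
qed

lemma card_le_of_almost_full_core:
  fixes n k :: nat
  assumes k: "5 \<le> k" and n: "k ^ 3 \<le> n"
    and A: "A \<subseteq> ksets n k" and B: "B \<subseteq> ksets n k" and cross: "cross_intersecting A B"
    and x: "x \<in> {1..n}" and P: "{F \<in> A. x \<notin> F} \<noteq> {}" and Q: "{F \<in> B. x \<notin> F} \<noteq> {}"
    and r: "card (\<Inter>{F \<in> A. x \<notin> F}) = k - 1" and s: "card (\<Inter>{F \<in> B. x \<notin> F}) = k"
  shows "2 * card B \<le> hitting_count n k (2 * k - 1) + 2"
proof -
  have "k \<le> n" using mult_le_cube[of 1 k] k n by linarith
  have "card {F \<in> B. x \<notin> F} \<le> 1"
    using card_avoiding_le[OF B x Q _ \<open>k \<le> n\<close>, of k] s by simp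
  moreover have "card {F \<in> B. x \<in> F} \<le> hitting_count n k (k - 1) + ((n - 3) choose (k - 3))"
    using card_through_le[OF A B cross x P] r k by simp
  ultimately have "2 * card B \<le> 2 * hitting_count n k (k - 1) + 2 * ((n - 3) choose (k - 3)) + 2"
    using card_through_add_avoiding[OF finite_subset_ksets[OF B], of x] by linarith
  then show ?thesis using hitting_count_tail_bounds(1)[OF k n] by linarith
qed

lemma card_add_card_le_of_large_cores:
  fixes n k :: nat
  assumes k: "5 \<le> k" and n: "k ^ 3 \<le> n"
    and A: "A \<subseteq> ksets n k" and B: "B \<subseteq> ksets n k" and disjoint: "A \<inter> B = {}"
    and cross: "cross_intersecting A B"
    and x: "x \<in> {1..n}" and P: "{F \<in> A. x \<notin> F} \<noteq> {}" and Q: "{F \<in> B. x \<notin> F} \<noteq> {}"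
  defines "R \<equiv> \<Inter>{F \<in> A. x \<notin> F}" and "S \<equiv> \<Inter>{F \<in> B. x \<notin> F}"
  assumes large: "k - 1 \<le> card R" "k - 1 \<le> card S" and small_union: "card (R \<union> S) \<le> 2 * k - 2"
  shows "card A + card B \<le> hitting_count n k (2 * k - 1)"
proof -
  define d where "d = (n - 3) choose (k - 3)"
  have "k \<le> n" using mult_le_cube[of 1 k] k n by linarith
  have "card {F \<in> A. x \<notin> F} \<le> d" "card {F \<in> B. x \<notin> F} \<le> d"
    unfolding d_def using card_avoiding_le[OF A x P _ \<open>k \<le> n\<close>, of 3]
      card_avoiding_le[OF B x Q _ \<open>k \<le> n\<close>, of 3] large k unfolding R_def S_def by simp_all
  moreover have "k - card R = 0 \<or> k - card R = 1" "k - card S = 0 \<or> k - card S = 1"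
    using large Inter_ksets(3)[OF P] Inter_ksets(3)[OF Q] A B unfolding R_def S_def by fastforce+
  then have "(k - card R) ^ 2 * d \<le> d" "(k - card S) ^ 2 * d \<le> d" by auto
  moreover have "card {F \<in> A. x \<in> F} + card {F \<in> B. x \<in> F}
      \<le> hitting_count n k (card (R \<union> S)) + (k - card R) ^ 2 * d + (k - card S) ^ 2 * d"
    unfolding R_def S_def d_def using card_through_add_le[OF A B disjoint cross x P Q] k by simp
  moreover have "hitting_count n k (card (R \<union> S)) \<le> hitting_count n k (2 * k - 2)"
    using small_union by (rule hitting_count_mono)
  ultimately have "card A + card B \<le> hitting_count n k (2 * k - 2) + 4 * d"
    using card_through_add_avoiding[OF finite_subset_ksets[OF A], of x]
      card_through_add_avoiding[OF finite_subset_ksets[OF B], of x] by linarith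
  then show ?thesis using hitting_count_tail_bounds(2)[OF k n] unfolding d_def by linarith
qed

lemma min_card_le_of_large_cores:
  fixes n k :: nat
  assumes k: "5 \<le> k" and n: "k ^ 3 \<le> n"
    and A: "A \<subseteq> ksets n k" and B: "B \<subseteq> ksets n k" and disjoint: "A \<inter> B = {}"
    and cross: "cross_intersecting A B"
    and x: "x \<in> {1..n}" and P: "{F \<in> A. x \<notin> F} \<noteq> {}" and Q: "{F \<in> B. x \<notin> F} \<noteq> {}"
  defines "R \<equiv> \<Inter>{F \<in> A. x \<notin> F}" and "S \<equiv> \<Inter>{F \<in> B. x \<notin> F}"
  assumes r: "k - 1 \<le> card R" "card R \<le> card S"
  shows "2 * min (card A) (card B) \<le> hitting_count n k (2 * k - 1) + 2"
proof -
  have "k \<le> n" using mult_le_cube[of 1 k] k n by linarith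
  have s: "card S \<le> k" unfolding S_def using Inter_ksets(3)[OF Q] B by blast
  consider "card (R \<union> S) \<le> 2 * k - 2" | "card R = k" "card S = k" | "card R = k - 1" "card S = k"
    using card_Un_le[of R S] r s by linarith
  then show ?thesis
  proof cases
    case 1
    then have "card A + card B \<le> hitting_count n k (2 * k - 1)"
      using card_add_card_le_of_large_cores[OF k n A B disjoint cross x P Q] r
      unfolding R_def S_def by simp
    then show ?thesis using min.cobounded1[of "card A" "card B"] min.cobounded2[of "card A" "card B"]
      by linarith
  next
    case 2
    then have "card A + card B \<le> hitting_count n k (2 * k - 1) + 2"
      using card_add_card_le_of_full_cores[OF _ \<open>k \<le> n\<close> A B disjoint cross x P Q] k
      unfolding R_def S_def by simp
    then show ?thesis using min.cobounded1[of "card A" "card B"] min.cobounded2[of "card A" "card B"]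
      by linarith
  next
    case 3
    then have "2 * card B \<le> hitting_count n k (2 * k - 1) + 2"
      using card_le_of_almost_full_core[OF k n A B cross x P Q] unfolding R_def S_def by simp
    then show ?thesis using min.cobounded2[of "card A" "card B"] by linarith
  qed
qed

lemma min_card_le_of_large_through_core:
  fixes n k :: nat
  assumes k: "5 \<le> k" and n: "k ^ 3 \<le> n"
    and A: "A \<subseteq> ksets n k" and B: "B \<subseteq> ksets n k" and disjoint: "A \<inter> B = {}"
    and cross: "cross_intersecting A B"
    and x: "x \<in> {1..n}" and P: "{F \<in> A. x \<notin> F} \<noteq> {}" and Q: "{F \<in> B. x \<notin> F} \<noteq> {}"
    and r_le_s: "card (\<Inter>{F \<in> A. x \<notin> F}) \<le> card (\<Inter>{F \<in> B. x \<notin> F})"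
    and large: "((n - 2) choose (k - 2)) + k ^ 2 * ((n - 3) choose (k - 3)) < card {F \<in> B. x \<in> F}"
  shows "2 * min (card A) (card B) \<le> hitting_count n k (2 * k - 1) + 2"
proof -
  have r: "2 \<le> card (\<Inter>{F \<in> A. x \<notin> F})"
    using two_le_card_Inter_of_large_through[OF A B cross x P _ large] k by simp
  show ?thesis
  proof (cases "card (\<Inter>{F \<in> A. x \<notin> F}) + 2 \<le> k")
    case True
    then have "2 * card B \<le> hitting_count n k (2 * k - 1)"
      using card_le_of_small_core[OF k n A B cross x P Q] r r_le_s by blast
    then show ?thesis by linarith
  next
    case False
    then show ?thesis
      using min_card_le_of_large_cores[OF k n A B disjoint cross x P Q] r_le_s by simp
  qed
qed

lemma card_le_of_small_through:
  fixes n k :: nat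
  assumes k: "5 \<le> k" and n: "k ^ 3 \<le> n"
    and A: "A \<subseteq> ksets n k" and B: "B \<subseteq> ksets n k" and cross: "cross_intersecting A B"
    and x: "x \<in> {1..n}" and Q: "{F \<in> B. x \<notin> F} \<noteq> {}"
  defines "c \<equiv> (n - 2) choose (k - 2)" and "d \<equiv> (n - 3) choose (k - 3)"
  assumes large_A: "c + k ^ 2 * d < card {F \<in> A. x \<in> F}"
    and small_B: "card {F \<in> B. x \<in> F} \<le> c + k ^ 2 * d"
  shows "2 * card B \<le> hitting_count n k (2 * k - 1)"
proof -
  have "k \<le> n" using mult_le_cube[of 1 k] k n by linarith
  have "2 \<le> card (\<Inter>{F \<in> B. x \<notin> F})"
    using two_le_card_Inter_of_large_through[OF B A cross_intersecting_sym[OF cross] x Q] large_A k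
    unfolding c_def d_def by simp
  then have "card {F \<in> B. x \<notin> F} \<le> c"
    unfolding c_def using card_avoiding_le[OF B x Q _ \<open>k \<le> n\<close>] by simp
  then have "2 * card B \<le> 4 * (c + k ^ 2 * d)"
    using small_B card_through_add_avoiding[OF finite_subset_ksets[OF B], of x] by simp
  also have "\<dots> \<le> hitting_count n k (2 * k - 1)"
    using hitting_count_bounds(2)[OF k n] unfolding c_def d_def .
  finally show ?thesis .
qed

lemma min_card_le_of_large_through:
  fixes n k :: nat
  assumes k: "5 \<le> k" and n: "k ^ 3 \<le> n"
    and A: "A \<subseteq> ksets n k" and B: "B \<subseteq> ksets n k" and disjoint: "A \<inter> B = {}"
    and cross: "cross_intersecting A B" and A_not_star: "\<not> is_star n A" and B_not_star: "\<not> is_star n B"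
  defines "c \<equiv> (n - 2) choose (k - 2)" and "d \<equiv> (n - 3) choose (k - 3)"
  assumes large_A: "c + k ^ 2 * d < card {F \<in> A. x \<in> F}"
  shows "2 * min (card A) (card B) \<le> hitting_count n k (2 * k - 1) + 2"
proof -
  have "0 < card {F \<in> A. x \<in> F}" using large_A by linarith
  then obtain F where "F \<in> A" "x \<in> F" unfolding card_gt_0_iff by blast
  then have x: "x \<in> {1..n}" using A ksetsD(1) by blast
  then have "1 \<le> n" by simp
  have P: "{F \<in> A. x \<notin> F} \<noteq> {}" and Q: "{F \<in> B. x \<notin> F} \<noteq> {}"
    using not_star_avoiding[OF A A_not_star \<open>1 \<le> n\<close>, of x]
      not_star_avoiding[OF B B_not_star \<open>1 \<le> n\<close>, of x] by auto
  consider "card {F \<in> B. x \<in> F} \<le> c + k ^ 2 * d"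
    | "c + k ^ 2 * d < card {F \<in> B. x \<in> F}"
      "card (\<Inter>{F \<in> A. x \<notin> F}) \<le> card (\<Inter>{F \<in> B. x \<notin> F})"
    | "c + k ^ 2 * d < card {F \<in> B. x \<in> F}"
      "card (\<Inter>{F \<in> B. x \<notin> F}) \<le> card (\<Inter>{F \<in> A. x \<notin> F})"
    by linarith
  then show ?thesis
  proof cases
    case 1
    then have "2 * card B \<le> hitting_count n k (2 * k - 1)"
      using card_le_of_small_through[OF k n A B cross x Q] large_A unfolding c_def d_def by blast
    then show ?thesis using min.cobounded2[of "card A" "card B"] by linarith
  next
    case 2
    then show ?thesis
      using min_card_le_of_large_through_core[OF k n A B disjoint cross x P Q] unfolding c_def d_def by blast
  next
    case 3
    then have "2 * min (card B) (card A) \<le> hitting_count n k (2 * k - 1) + 2"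
      using min_card_le_of_large_through_core[OF k n B A _ cross_intersecting_sym[OF cross] x Q P]
        large_A disjoint unfolding c_def d_def by (simp add: Int_commute)
    then show ?thesis by (simp add: min.commute)
  qed
qed

lemma min_card_le:
  fixes n k :: nat
  assumes k: "5 \<le> k" and n: "k ^ 3 \<le> n"
    and A: "A \<subseteq> ksets n k" and B: "B \<subseteq> ksets n k" and disjoint: "A \<inter> B = {}"
    and cross: "cross_intersecting A B" and A_not_star: "\<not> is_star n A" and B_not_star: "\<not> is_star n B"
  shows "2 * min (card A) (card B) \<le> hitting_count n k (2 * k - 1) + 2"
proof (cases "\<forall>a b. \<exists>F\<in>A. a \<notin> F \<and> b \<notin> F")
  case True
  have "2 * card B \<le> 2 * (k ^ 3 * ((n - 3) choose (k - 3)))"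
    using card_le_of_no_double_cover[OF A True B cross] k by simp
  also have "\<dots> \<le> hitting_count n k (2 * k - 1)" by (rule hitting_count_bounds(1)[OF k n])
  finally show ?thesis using min.cobounded2[of "card A" "card B"] by linarith
next
  case False
  then obtain a b where "\<forall>F\<in>A. a \<in> F \<or> b \<in> F" by blast
  then obtain x where half: "card A \<le> 2 * card {F \<in> A. x \<in> F}"
    using exists_half_through[OF finite_subset_ksets[OF A]] by blast
  show ?thesis
  proof (cases "card {F \<in> A. x \<in> F} \<le> ((n - 2) choose (k - 2)) + k ^ 2 * ((n - 3) choose (k - 3))")
    case True
    have "2 * card A \<le> 4 * card {F \<in> A. x \<in> F}" using half by simp
    also have "\<dots> \<le> 4 * (((n - 2) choose (k - 2)) + k ^ 2 * ((n - 3) choose (k - 3)))"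
      using True by (rule mult_le_mono2)
    also have "\<dots> \<le> hitting_count n k (2 * k - 1)" by (rule hitting_count_bounds(2)[OF k n])
    finally show ?thesis using min.cobounded1[of "card A" "card B"] by linarith
  next
    case False
    then show ?thesis by (intro min_card_le_of_large_through[OF assms, of x]) simp
  qed
qed

section \<open>The extremal construction\<close>

lemma not_star_of_disjoint_members:
  assumes "F \<in> \<F>" "G \<in> \<F>" "F \<inter> G = {}"
  shows "\<not> is_star n \<F>"
  using assms unfolding is_star_def by blast

lemma insert_Diff_mem_star_hitting:
  assumes T: "T \<in> ksets n k" and T': "T' \<in> ksets n k" and meet: "card (T \<inter> T') = 1"
    and x: "x \<in> {1..n}" "x \<notin> T \<union> T'" and "2 \<le> k"
  shows "insert x (T - T') \<in> star_hitting n k x T - star_hitting n k x T'"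
proof -
  have "finite T" "card T = k" "T \<subseteq> {1..n}" using ksetsD[OF T] by auto
  then have "card (T - T') = k - 1" using meet by (metis card_Diff_subset_Int finite_Int Int_lower1)
  moreover have "T - T' \<noteq> {}"
  proof
    assume empty: "T - T' = {}"
    have "card (T - T') = 0" unfolding empty by (rule card.empty)
    then show False using \<open>card (T - T') = k - 1\<close> \<open>2 \<le> k\<close> by linarith
  qed
  ultimately have "card (insert x (T - T')) = k" "T - T' \<noteq> {}"
    using x \<open>finite T\<close> \<open>2 \<le> k\<close> by auto
  then show ?thesis
    using x \<open>T \<subseteq> {1..n}\<close> unfolding star_hitting_def ksets_def by auto
qed

lemma hitting_families_admissible:
  assumes T1: "T1 \<in> ksets n k" and T2: "T2 \<in> ksets n k" and meet: "card (T1 \<inter> T2) = 1"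
    and x: "x \<in> {1..n}" "x \<notin> T1 \<union> T2" and "2 \<le> k"
    and H: "H \<subseteq> star_hitting n k x T1 \<inter> star_hitting n k x T2"
  defines "A \<equiv> insert T2 ((star_hitting n k x T1 - star_hitting n k x T2) \<union> H)"
    and "B \<equiv> insert T1 ((star_hitting n k x T2 - star_hitting n k x T1) \<union>
      (star_hitting n k x T1 \<inter> star_hitting n k x T2 - H))"
  shows "A \<subseteq> ksets n k" "B \<subseteq> ksets n k" "A \<inter> B = {}" "cross_intersecting A B"
    "\<not> is_star n A" "\<not> is_star n B"
proof -
  let ?H1 = "star_hitting n k x T1" and ?H2 = "star_hitting n k x T2"
  have T1_notin: "T1 \<notin> ?H1 \<union> ?H2" and T2_notin: "T2 \<notin> ?H1 \<union> ?H2"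
    using x by (auto simp: star_hitting_def)
  have "T1 \<noteq> T2" using meet ksetsD(2)[OF T1] \<open>2 \<le> k\<close> by auto
  show "A \<subseteq> ksets n k" "B \<subseteq> ksets n k"
    using T1 T2 H unfolding A_def B_def star_hitting_def by auto
  show "A \<inter> B = {}"
    using T1_notin T2_notin \<open>T1 \<noteq> T2\<close> H unfolding A_def B_def by blast
  have "T1 \<inter> T2 \<noteq> {}" using meet by auto
  then show "cross_intersecting A B"
    using H unfolding A_def B_def cross_intersecting_def star_hitting_def by blast
  show "\<not> is_star n A"
    using insert_Diff_mem_star_hitting[OF T1 T2 meet x \<open>2 \<le> k\<close>]
    by (intro not_star_of_disjoint_members[of T2 _ "insert x (T1 - T2)"]) (use x in \<open>auto simp: A_def\<close>)
  show "\<not> is_star n B"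
    using insert_Diff_mem_star_hitting[OF T2 T1 _ _ _ \<open>2 \<le> k\<close>, of x] meet x
    by (intro not_star_of_disjoint_members[of T1 _ "insert x (T2 - T1)"])
      (auto simp: B_def Int_commute Un_commute)
qed

lemma card_star_hitting_parts:
  assumes T1: "T1 \<in> ksets n k" and T2: "T2 \<in> ksets n k" and meet: "card (T1 \<inter> T2) = 1"
    and x: "x \<in> {1..n}" "x \<notin> T1 \<union> T2" and "2 \<le> k"
  defines "H1 \<equiv> star_hitting n k x T1" and "H2 \<equiv> star_hitting n k x T2"
  shows "card (H1 - H2) = card (H2 - H1)"
    and "card (H1 - H2) + card (H2 - H1) + card (H1 \<inter> H2) = hitting_count n k (2 * k - 1)"
proof -
  have T: "T1 \<subseteq> {1..n}" "T2 \<subseteq> {1..n}" "finite T1" "finite T2" "card T1 = k" "card T2 = k"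
    using ksetsD T1 T2 by auto
  have "card (T1 \<union> T2) = 2 * k - 1" using card_Un_Int[of T1 T2] T meet by simp
  have fin: "finite H1" "finite H2"
    unfolding H1_def H2_def using finite_subset_ksets[OF star_hitting_subset_ksets] by auto
  show "card (H1 - H2) = card (H2 - H1)"
    using card_star_hitting_Diff[of T1 n T2 x k] card_star_hitting_Diff[of T2 n T1 x k] T x \<open>2 \<le> k\<close>
    unfolding H1_def H2_def by (simp add: Un_commute)
  have "H2 \<inter> H1 = H1 \<inter> H2" by blast
  then have "card (H1 - H2) = card H1 - card (H1 \<inter> H2)" "card (H2 - H1) = card H2 - card (H1 \<inter> H2)"
    using fin card_Diff_subset_Int[of H1 H2] card_Diff_subset_Int[of H2 H1] by simp_all
  moreover have "card (H1 \<union> H2) = hitting_count n k (2 * k - 1)"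
    unfolding H1_def H2_def star_hitting_Un[symmetric] \<open>card (T1 \<union> T2) = 2 * k - 1\<close>[symmetric]
    using T x \<open>2 \<le> k\<close> by (intro card_star_hitting) auto
  moreover have "card H1 + card H2 = card (H1 \<union> H2) + card (H1 \<inter> H2)"
    using fin by (rule card_Un_Int)
  moreover have "card (H1 \<inter> H2) \<le> card H1" "card (H1 \<inter> H2) \<le> card H2"
    using card_mono[OF fin(1) Int_lower1] card_mono[OF fin(2) Int_lower2] .
  ultimately show "card (H1 - H2) + card (H2 - H1) + card (H1 \<inter> H2) = hitting_count n k (2 * k - 1)"
    by linarith
qed

lemma exists_admissible_pair_with_min_card:
  assumes T1: "T1 \<in> ksets n k" and T2: "T2 \<in> ksets n k" and meet: "card (T1 \<inter> T2) = 1"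
    and x: "x \<in> {1..n}" "x \<notin> T1 \<union> T2" and "2 \<le> k"
  shows "\<exists>A B. A \<subseteq> ksets n k \<and> B \<subseteq> ksets n k \<and> A \<inter> B = {} \<and> cross_intersecting A B \<and>
    \<not> is_star n A \<and> \<not> is_star n B \<and> min (card A) (card B) = hitting_count n k (2 * k - 1) div 2 + 1"
proof -
  let ?H1 = "star_hitting n k x T1" and ?H2 = "star_hitting n k x T2"
  note parts = card_star_hitting_parts[OF T1 T2 meet x \<open>2 \<le> k\<close>]
  have fin: "finite ?H1" "finite ?H2" using finite_subset_ksets[OF star_hitting_subset_ksets] by auto
  have "card (?H1 \<inter> ?H2) div 2 \<le> card (?H1 \<inter> ?H2)" by simp
  then obtain H where H: "H \<subseteq> ?H1 \<inter> ?H2" "card H = card (?H1 \<inter> ?H2) div 2" "finite H"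
    by (rule obtain_subset_with_card_n)
  define A B where "A = insert T2 ((?H1 - ?H2) \<union> H)"
    and "B = insert T1 ((?H2 - ?H1) \<union> (?H1 \<inter> ?H2 - H))"
  note admissible = hitting_families_admissible[OF T1 T2 meet x \<open>2 \<le> k\<close> H(1), folded A_def B_def]
  have notin: "T1 \<notin> ?H1 \<union> ?H2" "T2 \<notin> ?H1 \<union> ?H2" using x by (auto simp: star_hitting_def)
  have "card ((?H1 - ?H2) \<union> H) = card (?H1 - ?H2) + card H"
    using fin H by (intro card_Un_disjoint) auto
  then have card_A: "card A = card (?H1 - ?H2) + card H + 1"
    unfolding A_def using fin H notin by (subst card_insert_disjoint) auto
  have "card ((?H2 - ?H1) \<union> (?H1 \<inter> ?H2 - H)) = card (?H2 - ?H1) + card (?H1 \<inter> ?H2 - H)"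
    using fin by (intro card_Un_disjoint) auto
  then have card_B: "card B = card (?H2 - ?H1) + (card (?H1 \<inter> ?H2) - card H) + 1"
    unfolding B_def using fin H notin by (subst card_insert_disjoint) (auto simp: card_Diff_subset)
  have "min (card A) (card B) = hitting_count n k (2 * k - 1) div 2 + 1"
    unfolding card_A card_B using parts H(2) by simp
  then show ?thesis using admissible by blast
qed

lemma f_star_eqI:
  assumes le: "\<And>A B. A \<subseteq> ksets n k \<Longrightarrow> B \<subseteq> ksets n k \<Longrightarrow> A \<inter> B = {} \<Longrightarrow> cross_intersecting A B
      \<Longrightarrow> \<not> is_star n A \<Longrightarrow> \<not> is_star n B \<Longrightarrow> min (card A) (card B) \<le> m"
    and attained: "\<exists>A B. A \<subseteq> ksets n k \<and> B \<subseteq> ksets n k \<and> A \<inter> B = {} \<and> cross_intersecting A B \<and>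
      \<not> is_star n A \<and> \<not> is_star n B \<and> min (card A) (card B) = m"
  shows "f_star n k = m"
  unfolding f_star_def
proof (rule Max_eqI)
  show "finite {min (card A) (card B) | A B. A \<subseteq> ksets n k \<and> B \<subseteq> ksets n k \<and> A \<inter> B = {} \<and>
      cross_intersecting A B \<and> \<not> is_star n A \<and> \<not> is_star n B}"
    by (rule finite_subset[of _ "{..m}"]) (auto dest: le)
qed (use le attained in auto)

lemma choose_diff_eq_hitting_count:
  assumes "2 \<le> k" "2 * k \<le> n"
  shows "(n - 1) choose (n - k) = ((n - 2 * k) choose (k - 1)) + hitting_count n k (2 * k - 1)"
proof -
  have "(n - 1) choose (k - 1) = (n - 1) choose ((n - 1) - (k - 1))"
    using assms by (intro binomial_symmetric) simp
  moreover have "(n - 1) - (k - 1) = n - k" using assms by simp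
  ultimately have "(n - 1) choose (n - k) = (n - 1) choose (k - 1)" by simp
  also have "\<dots> = ((n - 1 - (2 * k - 1)) choose (k - 1)) + hitting_count n k (2 * k - 1)"
    using assms by (intro choose_eq_hitting_count) auto
  also have "n - 1 - (2 * k - 1) = n - 2 * k" using assms by simp
  finally show ?thesis .
qed

theorem theorem5p4:
  fixes n k :: nat
  assumes "k \<ge> 5" and "n \<ge> k ^ 3"
  shows "int (f_star n k) =
    \<lfloor>(real ((n - 1) choose (n - k)) - real ((n - 2 * k) choose (k - 1))) / 2\<rfloor> + 1"
proof -
  let ?X = "hitting_count n k (2 * k - 1)"
  have "3 * k \<le> n" using mult_le_cube[of 3 k] assms by linarith
  have "f_star n k = ?X div 2 + 1"
  proof (rule f_star_eqI)
    fix A B assume "A \<subseteq> ksets n k" "B \<subseteq> ksets n k" "A \<inter> B = {}" "cross_intersecting A B"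
      "\<not> is_star n A" "\<not> is_star n B"
    from min_card_le[OF assms this] show "min (card A) (card B) \<le> ?X div 2 + 1" by linarith
  next
    have "{2..k + 1} \<inter> {k + 1..2 * k} = {k + 1}" using assms(1) by auto
    then show "\<exists>A B. A \<subseteq> ksets n k \<and> B \<subseteq> ksets n k \<and> A \<inter> B = {} \<and> cross_intersecting A B \<and>
        \<not> is_star n A \<and> \<not> is_star n B \<and> min (card A) (card B) = ?X div 2 + 1"
      using \<open>3 * k \<le> n\<close> assms(1)
      by (intro exists_admissible_pair_with_min_card[of "{2..k + 1}" n k "{k + 1..2 * k}" 1])
        (auto simp: ksets_def)
  qed
  then show ?thesis
    using choose_diff_eq_hitting_count[of k n] \<open>3 * k \<le> n\<close> assms(1)
      floor_divide_of_nat_eq[where 'a = real, of ?X 2] by simp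
qed

end
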